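(* Let $Q\in\mathbb{R}^{n\times n}$ be symmetric positive definite, $\|x\|=\sqrt{x^TQx}$, $\|u\|_*=\sqrt{u^TQ^{-1}u}$. Let $f\colon\mathbb{R}^n\to\mathbb{R}$ be convex and differentiable with $\|\nabla f(x)-\nabla f(y)\|_*\le L\|x-y\|$ for all $x,y$, and assume $f$ has a minimizer $x_\star$, $f_\star=f(x_\star)$. Let $w$ be differentiable and $1$-strongly convex with respect to $\|\cdot\|$, and $V_x(y)=w(y)-\langle\nabla w(x),y-x\rangle-w(x)$. Let $\{\alpha_k\}_{k=1}^\infty$ be positive with $\alpha_1=\frac2L$ and $0\le\alpha_{k+1}^2L-2\alpha_{k+1}\le\alpha_k^2L$ for $k\ge1$, and $\tau_k=\frac2{\alpha_{k+1}L}$ for $k\ge1$. Given $x_0$, let $y_0=z_0=x_0$ and for $k=0,1,\dots$ \[ y_{k+1}=x_k-L^{-1}Q^{-1}\nabla f(x_k),\quad z_{k+1}=\operatorname*{argmin}_{y}\{V_{z_k}(y)+\langle\alpha_{k+1}\nabla f(x_k),y-x_k\rangle\},\quad x_{k+1}=(1-\tau_{k+1})y_{k+1}+\tau_{k+1}z_{k+1}. \] Let $\{\tilde\alpha_k\}_{k=1}^\infty$ be positive with $\tilde\alpha_1=\frac1L$ and $0\le\tilde\alpha_{k+1}^2L-\tilde\alpha_{k+1}\le\frac12\alpha_k^2L$ for $k\ge1$, let $\tilde\tau_k=\frac{1}{\tilde\alpha_{k+1}L}$ and $\tilde x_k=(1-\tilde\tau_k)y_k+\tilde\tau_kz_k$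 for $k\ge0$. Then for $k=0,1,\dots$, \[ f(\tilde x_k)-f_\star\le\frac{V_{x_0}(x_\star)}{L\tilde\alpha_{k+1}^2}. \]
   Context: $\langle\cdot,\cdot\rangle$ is the standard Euclidean inner product. "$1$-strongly convex with respect to $\|\cdot\|$" means $w(y)\ge w(x)+\langle\nabla w(x),y-x\rangle+\frac12\|y-x\|^2$ for all $x,y$. *)

theory Defs
  imports "HOL-Analysis.Analysis"
begin

definition qnorm :: "real^'n^'n \<Rightarrow> real^'n \<Rightarrow> real" where
  "qnorm Q x = sqrt (x \<bullet> (Q *v x))"

definition dnorm :: "real^'n^'n \<Rightarrow> real^'n \<Rightarrow> real" where
  "dnorm Q u = sqrt (u \<bullet> (matrix_inv Q *v u))"

definition sym_pos_def_mat :: "real^'n^'n \<Rightarrow> bool" where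
  "sym_pos_def_mat Q \<longleftrightarrow> transpose Q = Q \<and> (\<forall>x. x \<noteq> 0 \<longrightarrow> x \<bullet> (Q *v x) > 0)"

definition bregman :: "(real^'n \<Rightarrow> real) \<Rightarrow> (real^'n \<Rightarrow> real^'n) \<Rightarrow> real^'n \<Rightarrow> real^'n \<Rightarrow> real" where
  "bregman w gw x y = w y - gw x \<bullet> (y - x) - w x"

end

(*
  Put F(x) = f(x) - |grad f(x)|_*^2 / (2L): a gradient step from x reaches a value at most F(x).
  Convexity and L-smoothness give the cocoercivity inequality
    f(v) >= f(u) + <grad f(u), v - u> + |grad f(v) - grad f(u)|_*^2 / (2L),
  which bounds <grad f(v), x_star - v> by f_star - f(v) - |grad f(v)|_*^2 / (2L), and
  <grad f(v), y - v> by F(p) - f(v) - |grad f(v)|_*^2 / (2L) when y is the gradient step from p.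
  The coupling gives x_k - z_k = c (y_k - x_k) with c = alpha_{k+1} L / 2 - 1 >= 0, so these two
  bounds combine with the mirror-descent estimate
    V_{z'}(x_star) <= V_z(x_star) + a^2 |g|_*^2 / 2 - a <g, z - x_star>
  into the statement that the potential alpha_{k+1}^2 L/2 (F(x_k) - f_star) + V_{z_{k+1}}(x_star)
  never exceeds V_{x_0}(x_star); the recurrence on alpha is what makes it nonincreasing.
  The same estimate at the auxiliary point, with coupling coefficient alpha~_{k+1} L - 1 and the
  recurrence on alpha~ to compare with the potential, gives the bound.
*)

theory Submission
  imports Defs
begin

lemma sym_pos_def_mat_inverse:
  fixes Q :: "real^'n^'n"
  assumes Q: "sym_pos_def_mat Q"
  shows "Q ** matrix_inv Q = mat 1" "matrix_inv Q ** Q = mat 1"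
proof -
  have "inj ((*v) Q)"
  proof (rule injI)
    fix a b assume "Q *v a = Q *v b"
    then have "(a - b) \<bullet> (Q *v (a - b)) = 0" by (simp add: matrix_vector_mult_diff_distrib)
    then show "a = b" using Q unfolding sym_pos_def_mat_def by (metis less_irrefl right_minus_eq)
  qed
  then have "\<exists>A'. Q ** A' = mat 1 \<and> A' ** Q = mat 1"
    using matrix_left_invertible_injective invertible_left_inverse unfolding invertible_def by blast
  then have "Q ** matrix_inv Q = mat 1 \<and> matrix_inv Q ** Q = mat 1"
    unfolding matrix_inv_def by (rule someI_ex)
  then show "Q ** matrix_inv Q = mat 1" "matrix_inv Q ** Q = mat 1" by auto
qed

lemma sym_pos_def_mat_inv_cancel:
  fixes Q :: "real^'n^'n"
  assumes "sym_pos_def_mat Q"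
  shows "Q *v (matrix_inv Q *v u) = u"
  by (simp add: matrix_vector_mul_assoc sym_pos_def_mat_inverse[OF assms])

lemma sym_pos_def_mat_inner_commute:
  fixes Q :: "real^'n^'n"
  assumes "sym_pos_def_mat Q"
  shows "a \<bullet> (Q *v b) = b \<bullet> (Q *v a)"
proof -
  have "a \<bullet> (Q *v b) = (a v* transpose Q) \<bullet> b"
    using assms by (simp add: dot_lmul_matrix sym_pos_def_mat_def)
  then show ?thesis by (simp add: inner_commute)
qed

lemma sym_pos_def_mat_inv_inner_commute:
  fixes Q :: "real^'n^'n"
  assumes Q: "sym_pos_def_mat Q"
  shows "a \<bullet> (matrix_inv Q *v b) = b \<bullet> (matrix_inv Q *v a)"
  using sym_pos_def_mat_inner_commute[OF Q, of "matrix_inv Q *v b" "matrix_inv Q *v a"]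
  by (simp add: sym_pos_def_mat_inv_cancel[OF Q] inner_commute)

lemma sym_pos_def_mat_nonneg:
  fixes Q :: "real^'n^'n"
  assumes "sym_pos_def_mat Q"
  shows "0 \<le> x \<bullet> (Q *v x)"
  using assms unfolding sym_pos_def_mat_def by (cases "x = 0") (auto intro: less_imp_le)

lemma qnorm_sq:
  fixes Q :: "real^'n^'n"
  assumes "sym_pos_def_mat Q"
  shows "(qnorm Q x)\<^sup>2 = x \<bullet> (Q *v x)"
  unfolding qnorm_def using sym_pos_def_mat_nonneg[OF assms] by simp

lemma qnorm_matrix_inv:
  fixes Q :: "real^'n^'n"
  assumes "sym_pos_def_mat Q"
  shows "qnorm Q (matrix_inv Q *v u) = dnorm Q u"
  unfolding qnorm_def dnorm_def by (simp add: sym_pos_def_mat_inv_cancel[OF assms] inner_commute)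

lemma dnorm_sq:
  fixes Q :: "real^'n^'n"
  assumes "sym_pos_def_mat Q"
  shows "(dnorm Q u)\<^sup>2 = u \<bullet> (matrix_inv Q *v u)"
  using qnorm_sq[OF assms, of "matrix_inv Q *v u"]
  by (simp add: qnorm_matrix_inv[OF assms] sym_pos_def_mat_inv_cancel[OF assms] inner_commute)

lemma dnorm_nonneg:
  fixes Q :: "real^'n^'n"
  assumes "sym_pos_def_mat Q"
  shows "0 \<le> dnorm Q u"
  using dnorm_sq[OF assms, of u] unfolding dnorm_def by simp

lemma qnorm_scaleR: "qnorm Q (c *\<^sub>R x) = \<bar>c\<bar> * qnorm Q x"
  unfolding qnorm_def by (simp add: matrix_vector_mult_scaleR real_sqrt_mult mult.assoc[symmetric])

lemma dnorm_scaleR: "dnorm Q (c *\<^sub>R u) = \<bar>c\<bar> * dnorm Q u"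
  unfolding dnorm_def by (simp add: matrix_vector_mult_scaleR real_sqrt_mult mult.assoc[symmetric])

lemma qnorm_uminus [simp]: "qnorm Q (- x) = qnorm Q x"
  using qnorm_scaleR[of Q "-1" x] by simp

lemma dnorm_uminus [simp]: "dnorm Q (- u) = dnorm Q u"
  using dnorm_scaleR[of Q "-1" u] by simp

lemma qnorm_minus_commute: "qnorm Q (a - b) = qnorm Q (b - a)"
  using qnorm_uminus[of Q "b - a"] by simp

lemma dnorm_diff_sq:
  fixes Q :: "real^'n^'n"
  assumes Q: "sym_pos_def_mat Q"
  shows "(dnorm Q (a - b))\<^sup>2 = (dnorm Q a)\<^sup>2 + (dnorm Q b)\<^sup>2 - 2 * (b \<bullet> (matrix_inv Q *v a))"
  using sym_pos_def_mat_inv_inner_commute[OF Q, of a b]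
  by (simp add: dnorm_sq[OF Q] matrix_vector_mult_diff_distrib inner_diff_left inner_diff_right)

lemma fenchel_young_qnorm:
  fixes Q :: "real^'n^'n"
  assumes Q: "sym_pos_def_mat Q" and s: "s > 0"
  shows "2 * (u \<bullet> d) \<le> s * (dnorm Q u)\<^sup>2 + (qnorm Q d)\<^sup>2 / s"
proof -
  define p where "p = matrix_inv Q *v u"
  have Qp: "Q *v p = u" by (simp add: p_def sym_pos_def_mat_inv_cancel[OF Q])
  have "0 \<le> (qnorm Q (s *\<^sub>R p - d))\<^sup>2" by simp
  also have "\<dots> = (s *\<^sub>R p - d) \<bullet> (s *\<^sub>R u - Q *v d)"
    by (simp add: qnorm_sq[OF Q] Qp matrix_vector_mult_diff_distrib matrix_vector_mult_scaleR)
  also have "\<dots> = s\<^sup>2 * (p \<bullet> u) - 2 * s * (u \<bullet> d) + d \<bullet> (Q *v d)"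
    using sym_pos_def_mat_inner_commute[OF Q, of p d]
    by (simp add: Qp inner_diff_left inner_diff_right inner_commute power2_eq_square algebra_simps)
  also have "\<dots> = s\<^sup>2 * (dnorm Q u)\<^sup>2 - 2 * s * (u \<bullet> d) + (qnorm Q d)\<^sup>2"
    by (simp add: qnorm_sq[OF Q] dnorm_sq[OF Q] p_def inner_commute)
  finally show ?thesis using s by (simp add: field_simps power2_eq_square)
qed

lemma has_real_derivative_along_line:
  fixes F :: "'a::real_inner \<Rightarrow> real"
  assumes "\<And>u. (F has_derivative (\<lambda>h. G u \<bullet> h)) (at u)"
  shows "((\<lambda>t. F (x + t *\<^sub>R d)) has_real_derivative (G (x + t *\<^sub>R d) \<bullet> d)) (at t within S)"
proof -
  have "((\<lambda>t. x + t *\<^sub>R d) has_derivative (\<lambda>s. s *\<^sub>R d)) (at t within S)"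
    by (auto intro!: derivative_eq_intros)
  from has_derivative_compose[OF this assms]
  have "((\<lambda>t. F (x + t *\<^sub>R d)) has_derivative (\<lambda>s. (G (x + t *\<^sub>R d) \<bullet> d) * s)) (at t within S)"
    by (simp add: mult.commute)
  then show ?thesis by (simp add: has_field_derivative_def)
qed

lemma convex_on_gradient_inequality:
  fixes F :: "'a::real_inner \<Rightarrow> real"
  assumes convex: "convex_on UNIV F"
    and grad: "\<And>u. (F has_derivative (\<lambda>h. G u \<bullet> h)) (at u)"
  shows "F x + G x \<bullet> (v - x) \<le> F v"
proof -
  define \<phi> where "\<phi> t = F (x + t *\<^sub>R (v - x))" for t
  have "convex_on UNIV \<phi>"
  proof (rule convex_onI)
    fix t a b :: real assume "0 < t" "t < 1"
    moreover have "x + ((1 - t) * a + t * b) *\<^sub>R (v - x)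
        = (1 - t) *\<^sub>R (x + a *\<^sub>R (v - x)) + t *\<^sub>R (x + b *\<^sub>R (v - x))"
      by (simp add: algebra_simps)
    ultimately show "\<phi> ((1 - t) *\<^sub>R a + t *\<^sub>R b) \<le> (1 - t) * \<phi> a + t * \<phi> b"
      unfolding \<phi>_def using convex_onD[OF convex] by simp
  qed simp
  moreover have "(\<phi> has_real_derivative (G x \<bullet> (v - x))) (at 0 within UNIV)"
    unfolding \<phi>_def using has_real_derivative_along_line[OF grad, of x "v - x" 0] by simp
  ultimately have "G x \<bullet> (v - x) * (1 - 0) \<le> \<phi> 1 - \<phi> 0"
    by (intro convex_on_imp_above_tangent[where A = UNIV]) auto
  then show ?thesis by (simp add: \<phi>_def)
qed

lemma gradient_zero_at_minimizer:
  fixes F :: "'a::real_inner \<Rightarrow> real"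
  assumes grad: "\<And>u. (F has_derivative (\<lambda>h. G u \<bullet> h)) (at u)"
    and min: "\<And>u. F x \<le> F u"
  shows "G x = 0"
proof -
  have "(\<lambda>h. G x \<bullet> h) = (\<lambda>h. 0)"
    by (rule differential_zero_maxmin[of x UNIV F]) (use grad min in auto)
  then have "G x \<bullet> G x = 0" by metis
  then show ?thesis by simp
qed

locale L_smooth =
  fixes Q :: "real^'n^'n" and L :: real and f :: "real^'n \<Rightarrow> real" and g :: "real^'n \<Rightarrow> real^'n"
  assumes spd: "sym_pos_def_mat Q"
    and L_pos: "L > 0"
    and has_gradient: "\<And>u. (f has_derivative (\<lambda>h. g u \<bullet> h)) (at u)"
    and gradient_lipschitz: "\<And>u v. dnorm Q (g u - g v) \<le> L * qnorm Q (u - v)"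
begin

definition gradient_step :: "real^'n \<Rightarrow> real^'n" where
  "gradient_step x = x - (1 / L) *\<^sub>R (matrix_inv Q *v g x)"

definition gradient_step_bound :: "real^'n \<Rightarrow> real" where
  "gradient_step_bound x = f x - (dnorm Q (g x))\<^sup>2 / (2 * L)"

lemma inner_gradient_diff_le: "(g y - g x) \<bullet> (y - x) \<le> L * (qnorm Q (y - x))\<^sup>2"
proof -
  have "(dnorm Q (g y - g x))\<^sup>2 \<le> L\<^sup>2 * (qnorm Q (y - x))\<^sup>2"
    using gradient_lipschitz[of y x] dnorm_nonneg[OF spd] by (simp add: power_mono power_mult_distrib[symmetric])
  then have "(1 / L) * (dnorm Q (g y - g x))\<^sup>2 \<le> L * (qnorm Q (y - x))\<^sup>2"
    using L_pos by (simp add: field_simps power2_eq_square)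
  moreover have "2 * ((g y - g x) \<bullet> (y - x)) \<le> (1 / L) * (dnorm Q (g y - g x))\<^sup>2 + L * (qnorm Q (y - x))\<^sup>2"
    using fenchel_young_qnorm[OF spd, of "1 / L" "g y - g x" "y - x"] L_pos by (simp add: mult.commute)
  ultimately show ?thesis by linarith
qed

lemma descent_lemma: "f y \<le> f x + g x \<bullet> (y - x) + L / 2 * (qnorm Q (y - x))\<^sup>2"
proof -
  define d where "d = y - x"
  define h where "h t = f (x + t *\<^sub>R d) - t * (g x \<bullet> d) - L / 2 * t\<^sup>2 * (qnorm Q d)\<^sup>2" for t
  have "h 1 \<le> h 0"
  proof (rule DERIV_nonpos_imp_nonincreasing[of 0 1 h])
    fix t :: real assume t: "0 \<le> t" "t \<le> 1"
    have "(h has_real_derivative ((g (x + t *\<^sub>R d) - g x) \<bullet> d - L * t * (qnorm Q d)\<^sup>2)) (at t)"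
      unfolding h_def
      by (auto intro!: derivative_eq_intros has_real_derivative_along_line[OF has_gradient]
          simp: power2_eq_square inner_diff_left)
    moreover have "(g (x + t *\<^sub>R d) - g x) \<bullet> d \<le> L * t * (qnorm Q d)\<^sup>2"
    proof (cases "t = 0")
      case False
      have "t * ((g (x + t *\<^sub>R d) - g x) \<bullet> d) \<le> t * (L * t * (qnorm Q d)\<^sup>2)"
        using inner_gradient_diff_le[of "x + t *\<^sub>R d" x] t
        by (simp add: qnorm_scaleR power_mult_distrib power2_eq_square algebra_simps)
      with False t show ?thesis by simp
    qed simp
    ultimately show "\<exists>y. (h has_real_derivative y) (at t) \<and> y \<le> 0" by auto
  qed simp
  then show ?thesis by (simp add: h_def d_def)
qed

lemma f_gradient_step_le: "f (gradient_step x) \<le> gradient_step_bound x"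
proof -
  have step: "gradient_step x - x = - (1 / L) *\<^sub>R (matrix_inv Q *v g x)"
    by (simp add: gradient_step_def)
  have "f (gradient_step x) \<le> f x + g x \<bullet> (gradient_step x - x) + L / 2 * (qnorm Q (gradient_step x - x))\<^sup>2"
    by (rule descent_lemma)
  also have "\<dots> = f x - (dnorm Q (g x))\<^sup>2 / L + L / 2 * ((dnorm Q (g x))\<^sup>2 / L\<^sup>2)"
    using L_pos by (simp add: step qnorm_scaleR qnorm_matrix_inv[OF spd] dnorm_sq[OF spd] power_mult_distrib power_divide)
  also have "\<dots> = gradient_step_bound x"
    using L_pos by (simp add: gradient_step_bound_def field_simps power2_eq_square)
  finally show ?thesis .
qed

end

locale L_smooth_convex = L_smooth +
  assumes convex: "convex_on UNIV f"
begin

lemma cocoercivity: "f x + g x \<bullet> (y - x) + (dnorm Q (g y - g x))\<^sup>2 / (2 * L) \<le> f y"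
proof -
  define \<phi> where "\<phi> v = f v - g x \<bullet> v" for v
  interpret \<phi>: L_smooth Q L \<phi> "\<lambda>v. g v - g x"
  proof
    show "(\<phi> has_derivative (\<lambda>h. (g u - g x) \<bullet> h)) (at u)" for u
      unfolding \<phi>_def
      by (rule has_derivative_eq_rhs, (rule derivative_eq_intros has_gradient)+) (auto simp: inner_diff_left)
  qed (use spd L_pos gradient_lipschitz in auto)
  \<comment> \<open>x minimizes the convex function \<phi>, so \<phi> x is below what a gradient step on \<phi> from y reaches\<close>
  have "\<phi> x \<le> \<phi> (\<phi>.gradient_step y)"
    using convex_on_gradient_inequality[OF convex has_gradient, of x "\<phi>.gradient_step y"]
    by (simp add: \<phi>_def inner_diff_right)
  also have "\<dots> \<le> \<phi>.gradient_step_bound y" by (rule \<phi>.f_gradient_step_le)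
  finally show ?thesis by (simp add: \<phi>.gradient_step_bound_def \<phi>_def inner_diff_right)
qed

lemma inner_gradient_step_le:
  "g v \<bullet> (gradient_step p - v) \<le> gradient_step_bound p - f v - (dnorm Q (g v))\<^sup>2 / (2 * L)"
proof -
  have "f v + g v \<bullet> (p - v) + (dnorm Q (g p - g v))\<^sup>2 / (2 * L) \<le> f p"
    by (rule cocoercivity)
  moreover have "(dnorm Q (g p - g v))\<^sup>2 / (2 * L)
      = (dnorm Q (g p))\<^sup>2 / (2 * L) + (dnorm Q (g v))\<^sup>2 / (2 * L) - (g v \<bullet> (matrix_inv Q *v g p)) / L"
    using L_pos by (simp add: dnorm_diff_sq[OF spd] field_simps)
  moreover have "g v \<bullet> (gradient_step p - v) = g v \<bullet> (p - v) - (g v \<bullet> (matrix_inv Q *v g p)) / L"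
    by (simp add: gradient_step_def inner_diff_right)
  ultimately show ?thesis by (simp add: gradient_step_bound_def)
qed

lemma inner_minimizer_le:
  assumes min: "\<And>u. f xs \<le> f u"
  shows "g v \<bullet> (xs - v) \<le> f xs - f v - (dnorm Q (g v))\<^sup>2 / (2 * L)"
  using cocoercivity[of v xs] gradient_zero_at_minimizer[OF has_gradient min] by simp

lemma coupled_inner_ge:
  assumes min: "\<And>u. f xs \<le> f u"
    and coupling: "v - z = c *\<^sub>R (gradient_step p - v)" and c: "c \<ge> 0"
  shows "(1 + c) * (f v - f xs + (dnorm Q (g v))\<^sup>2 / (2 * L)) - c * (gradient_step_bound p - f xs)
    \<le> g v \<bullet> (z - xs)"
proof -
  define r where "r = f v - f xs + (dnorm Q (g v))\<^sup>2 / (2 * L)"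
  have "g v \<bullet> (z - xs) = - (g v \<bullet> (xs - v)) - c * (g v \<bullet> (gradient_step p - v))"
    using arg_cong[OF coupling, of "\<lambda>u. g v \<bullet> u"] by (simp add: inner_diff_right)
  moreover have "g v \<bullet> (xs - v) \<le> - r"
    using inner_minimizer_le[OF min, of v] by (simp add: r_def)
  moreover have "c * (g v \<bullet> (gradient_step p - v)) \<le> c * ((gradient_step_bound p - f xs) - r)"
    using inner_gradient_step_le[of v p] c by (intro mult_left_mono) (simp_all add: r_def)
  ultimately show ?thesis
    unfolding r_def[symmetric] by (simp add: algebra_simps)
qed

end

lemma bregman_ge_half_qnorm_sq:
  assumes strongly_convex: "\<And>u v. w v \<ge> w u + gw u \<bullet> (v - u) + 1/2 * (qnorm Q (v - u))\<^sup>2"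
  shows "1/2 * (qnorm Q (v - z))\<^sup>2 \<le> bregman w gw z v"
  using strongly_convex[of z v] by (simp add: bregman_def)

lemma inner_le_bregman:
  fixes Q :: "real^'n^'n"
  assumes Q: "sym_pos_def_mat Q"
    and strongly_convex: "\<And>u v. w v \<ge> w u + gw u \<bullet> (v - u) + 1/2 * (qnorm Q (v - u))\<^sup>2"
  shows "a * (g \<bullet> (z - u)) \<le> a\<^sup>2 * (dnorm Q g)\<^sup>2 / 2 + bregman w gw z u"
proof -
  have "2 * ((a *\<^sub>R g) \<bullet> (z - u)) \<le> 1 * (dnorm Q (a *\<^sub>R g))\<^sup>2 + (qnorm Q (z - u))\<^sup>2 / 1"
    using Q by (rule fenchel_young_qnorm) simp
  then show ?thesis
    using bregman_ge_half_qnorm_sq[OF strongly_convex, of u z]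
    by (simp add: dnorm_scaleR power_mult_distrib qnorm_minus_commute[of Q z u])
qed

lemma bregman_argmin_gradient:
  assumes grad: "\<And>u. (w has_derivative (\<lambda>h. gw u \<bullet> h)) (at u)"
    and argmin: "\<And>u. bregman w gw z z' + a * (g \<bullet> (z' - p)) \<le> bregman w gw z u + a * (g \<bullet> (u - p))"
  shows "gw z' = gw z - a *\<^sub>R g"
proof -
  have "((\<lambda>u. bregman w gw z u + a * (g \<bullet> (u - p))) has_derivative
      (\<lambda>h. (gw v - gw z + a *\<^sub>R g) \<bullet> h)) (at v)" for v
    unfolding bregman_def
    by (auto intro!: derivative_eq_intros grad simp: fun_eq_iff algebra_simps inner_diff_left inner_add_left)
  from gradient_zero_at_minimizer[OF this argmin] show ?thesis
    by (simp add: algebra_simps)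
qed

lemma mirror_step_bregman_le:
  fixes Q :: "real^'n^'n"
  assumes Q: "sym_pos_def_mat Q"
    and strongly_convex: "\<And>u v. w v \<ge> w u + gw u \<bullet> (v - u) + 1/2 * (qnorm Q (v - u))\<^sup>2"
    and step: "gw z' = gw z - a *\<^sub>R g"
  shows "bregman w gw z' u \<le> bregman w gw z u + a\<^sup>2 * (dnorm Q g)\<^sup>2 / 2 - a * (g \<bullet> (z - u))"
proof -
  have "bregman w gw z' u = bregman w gw z u - bregman w gw z z' + a * (g \<bullet> (u - z'))"
    unfolding bregman_def step by (simp add: inner_diff_left inner_diff_right algebra_simps)
  moreover have "a * (g \<bullet> (z - z')) \<le> a\<^sup>2 * (dnorm Q g)\<^sup>2 / 2 + bregman w gw z z'"
    by (rule inner_le_bregman[OF Q strongly_convex])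
  ultimately show ?thesis by (simp add: inner_diff_right algebra_simps)
qed

lemma convex_combination_diff:
  fixes x y z :: "'a::real_vector"
  assumes "t \<noteq> 0" and "x = (1 - t) *\<^sub>R y + t *\<^sub>R z"
  shows "x - z = ((1 - t) / t) *\<^sub>R (y - x)"
proof -
  have "y - x = t *\<^sub>R (y - z)" and "x - z = (1 - t) *\<^sub>R (y - z)"
    using assms(2) by (simp_all add: algebra_simps)
  with assms(1) show ?thesis by simp
qed

locale linear_coupling = L_smooth_convex +
  fixes w gw xs x0 x y z and \<alpha> :: "nat \<Rightarrow> real"
  assumes xs_min: "\<And>u. f xs \<le> f u"
    and w_grad: "\<And>u. (w has_derivative (\<lambda>h. gw u \<bullet> h)) (at u)"
    and w_sc: "\<And>u v. w v \<ge> w u + gw u \<bullet> (v - u) + 1/2 * (qnorm Q (v - u))\<^sup>2"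
    and \<alpha>_pos: "\<And>k. k \<ge> 1 \<Longrightarrow> \<alpha> k > 0"
    and \<alpha>1: "\<alpha> 1 = 2 / L"
    and \<alpha>_rec: "\<And>k. k \<ge> 1 \<Longrightarrow>
        0 \<le> (\<alpha> (k+1))\<^sup>2 * L - 2 * \<alpha> (k+1) \<and> (\<alpha> (k+1))\<^sup>2 * L - 2 * \<alpha> (k+1) \<le> (\<alpha> k)\<^sup>2 * L"
    and y_init: "y 0 = x0" and z_init: "z 0 = x0" and x_init: "x 0 = x0"
    and y_step: "\<And>k. y (k+1) = x k - (1 / L) *\<^sub>R (matrix_inv Q *v g (x k))"
    and z_step: "\<And>k u. bregman w gw (z k) (z (k+1)) + \<alpha> (k+1) * (g (x k) \<bullet> (z (k+1) - x k))
                       \<le> bregman w gw (z k) u + \<alpha> (k+1) * (g (x k) \<bullet> (u - x k))"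
    and x_step: "\<And>k. x (k+1) = (1 - 2 / (\<alpha> (k+2) * L)) *\<^sub>R y (k+1)
                                 + (2 / (\<alpha> (k+2) * L)) *\<^sub>R z (k+1)"
begin

lemma y_eq_gradient_step: "y (Suc k) = gradient_step (x k)"
  using y_step[of k] by (simp add: gradient_step_def)

lemma min_le_gradient_step_bound: "f xs \<le> gradient_step_bound p"
  using xs_min[of "gradient_step p"] f_gradient_step_le[of p] by simp

lemma potential_step:
  assumes coupling: "x k - z k = c *\<^sub>R (gradient_step p - x k)" and c: "c \<ge> 0"
    and coefficient: "1 + c = \<alpha> (k+1) * L / 2"
  shows "(\<alpha> (k+1))\<^sup>2 * L / 2 * (gradient_step_bound (x k) - f xs) + bregman w gw (z (k+1)) xs
    \<le> bregman w gw (z k) xs + \<alpha> (k+1) * c * (gradient_step_bound p - f xs)"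
proof -
  define a where "a = \<alpha> (k+1)"
  define D where "D = (dnorm Q (g (x k)))\<^sup>2"
  define R where "R = f (x k) - f xs + D / (2 * L)"
  define S where "S = gradient_step_bound p - f xs"
  define G where "G = g (x k) \<bullet> (z k - xs)"
  have "a > 0" using \<alpha>_pos[of "k+1"] by (simp add: a_def)
  have "bregman w gw (z (k+1)) xs \<le> bregman w gw (z k) xs + a\<^sup>2 * D / 2 - a * G"
    unfolding a_def D_def G_def
    by (rule mirror_step_bregman_le[OF spd w_sc bregman_argmin_gradient[OF w_grad z_step]])
  moreover have "a\<^sup>2 * L / 2 * R - a * c * S \<le> a * G"
  proof -
    have "a * ((1 + c) * R - c * S) \<le> a * G"
      using coupled_inner_ge[OF xs_min coupling c] \<open>a > 0\<close> by (simp add: D_def R_def S_def G_def)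
    moreover have "a * (1 + c) = a\<^sup>2 * L / 2"
      using coefficient by (simp add: a_def power2_eq_square)
    ultimately show ?thesis by (simp add: right_diff_distrib mult.assoc[symmetric])
  qed
  moreover have "a\<^sup>2 * L / 2 * (gradient_step_bound (x k) - f xs) = a\<^sup>2 * L / 2 * R - a\<^sup>2 * D / 2"
    using L_pos by (simp add: gradient_step_bound_def R_def D_def field_simps)
  ultimately show ?thesis
    unfolding a_def[symmetric] S_def[symmetric] by linarith
qed

lemma potential_bound:
  "(\<alpha> (k+1))\<^sup>2 * L / 2 * (gradient_step_bound (x k) - f xs) + bregman w gw (z (k+1)) xs \<le> bregman w gw x0 xs"
proof (induction k)
  case 0
  have "x 0 - z 0 = 0 *\<^sub>R (gradient_step (x 0) - x 0)"
    by (simp add: x_init z_init)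
  from potential_step[OF this order.refl] show ?case
    using \<alpha>1 L_pos by (simp add: z_init)
next
  case (Suc k)
  define a where "a = \<alpha> (k+2)"
  define c where "c = a * L / 2 - 1"
  have "a > 0" using \<alpha>_pos[of "k+2"] by (simp add: a_def)
  have rec: "0 \<le> a * c" "a * c \<le> (\<alpha> (k+1))\<^sup>2 * L / 2"
    using \<alpha>_rec[of "k+1"] by (simp_all add: a_def c_def power2_eq_square algebra_simps)
  then have "c \<ge> 0" using \<open>a > 0\<close> by (simp add: zero_le_mult_iff)
  have "(1 - 2 / (a * L)) / (2 / (a * L)) = c"
    using \<open>a > 0\<close> L_pos by (simp add: c_def field_simps)
  then have "x (k+1) - z (k+1) = c *\<^sub>R (gradient_step (x k) - x (k+1))"
    using convex_combination_diff[OF _ x_step[of k]] \<open>a > 0\<close> L_pos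
    by (simp add: y_eq_gradient_step a_def)
  from potential_step[OF this \<open>c \<ge> 0\<close>]
  have "a\<^sup>2 * L / 2 * (gradient_step_bound (x (k+1)) - f xs) + bregman w gw (z (k+2)) xs
      \<le> bregman w gw (z (k+1)) xs + a * c * (gradient_step_bound (x k) - f xs)"
    by (simp add: a_def c_def)
  also have "\<dots> \<le> bregman w gw (z (k+1)) xs + (\<alpha> (k+1))\<^sup>2 * L / 2 * (gradient_step_bound (x k) - f xs)"
    using mult_right_mono[OF rec(2)] min_le_gradient_step_bound[of "x k"] by simp
  also have "\<dots> \<le> bregman w gw x0 xs"
    using Suc.IH by simp
  finally show ?case by (simp add: a_def)
qed

lemma auxiliary_point_bound:
  assumes coupling: "v - u = c *\<^sub>R (gradient_step p - v)" and c: "c \<ge> 0"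
    and coefficient: "1 + c = b * L"
  shows "b\<^sup>2 * L * (f v - f xs) \<le> bregman w gw u xs + b * c * (gradient_step_bound p - f xs)"
proof -
  define D where "D = (dnorm Q (g v))\<^sup>2"
  define R where "R = f v - f xs + D / (2 * L)"
  define S where "S = gradient_step_bound p - f xs"
  define G where "G = g v \<bullet> (u - xs)"
  have "b > 0" using coefficient c L_pos zero_less_mult_pos2[of b L] by linarith
  have "b * G \<le> b\<^sup>2 * D / 2 + bregman w gw u xs"
    unfolding G_def D_def by (rule inner_le_bregman[OF spd w_sc])
  moreover have "b\<^sup>2 * L * R - b * c * S \<le> b * G"
  proof -
    have "b * ((1 + c) * R - c * S) \<le> b * G"
      using coupled_inner_ge[OF xs_min coupling c] \<open>b > 0\<close> by (simp add: D_def R_def S_def G_def)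
    moreover have "b * (1 + c) = b\<^sup>2 * L"
      using coefficient by (simp add: power2_eq_square)
    ultimately show ?thesis by (simp add: right_diff_distrib mult.assoc[symmetric])
  qed
  moreover have "b\<^sup>2 * L * R = b\<^sup>2 * L * (f v - f xs) + b\<^sup>2 * D / 2"
    using L_pos by (simp add: R_def field_simps)
  ultimately show ?thesis
    unfolding S_def[symmetric] by linarith
qed

lemma auxiliary_sequence_bound:
  assumes \<alpha>t_pos: "\<And>k. k \<ge> 1 \<Longrightarrow> \<alpha>t k > 0"
    and \<alpha>t1: "\<alpha>t 1 = 1 / L"
    and \<alpha>t_rec: "\<And>k. k \<ge> 1 \<Longrightarrow>
        0 \<le> (\<alpha>t (k+1))\<^sup>2 * L - \<alpha>t (k+1) \<and> (\<alpha>t (k+1))\<^sup>2 * L - \<alpha>t (k+1) \<le> 1/2 * (\<alpha> k)\<^sup>2 * L"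
  shows "f ((1 - 1 / (\<alpha>t (k+1) * L)) *\<^sub>R y k + (1 / (\<alpha>t (k+1) * L)) *\<^sub>R z k) - f xs
    \<le> bregman w gw x0 xs / (L * (\<alpha>t (k+1))\<^sup>2)"
proof -
  define b where "b = \<alpha>t (k+1)"
  define c where "c = b * L - 1"
  define v where "v = (1 - 1 / (b * L)) *\<^sub>R y k + (1 / (b * L)) *\<^sub>R z k"
  have "b > 0" using \<alpha>t_pos[of "k+1"] by (simp add: b_def)
  have coupling: "v - z k = c *\<^sub>R (y k - v)"
  proof -
    have "(1 - 1 / (b * L)) / (1 / (b * L)) = c"
      using \<open>b > 0\<close> L_pos by (simp add: c_def field_simps)
    then show ?thesis
      using convex_combination_diff[OF _ v_def] \<open>b > 0\<close> L_pos by simp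
  qed
  have "b\<^sup>2 * L * (f v - f xs) \<le> bregman w gw x0 xs"
  proof (cases k)
    case 0
    then have "v - z k = 0 *\<^sub>R (gradient_step x0 - v)" and "1 + 0 = b * L"
      using \<alpha>t1 L_pos by (simp_all add: v_def b_def y_init z_init algebra_simps)
    from auxiliary_point_bound[OF this(1) order.refl this(2)] show ?thesis
      by (simp add: \<open>k = 0\<close> z_init)
  next
    case (Suc m)
    have rec: "0 \<le> b * c" "b * c \<le> (\<alpha> (m+1))\<^sup>2 * L / 2"
      using \<alpha>t_rec[of "m+1"] by (simp_all add: Suc b_def c_def power2_eq_square algebra_simps)
    then have "c \<ge> 0" using \<open>b > 0\<close> by (simp add: zero_le_mult_iff)
    have "v - z k = c *\<^sub>R (gradient_step (x m) - v)"
      using coupling by (simp add: Suc y_eq_gradient_step)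
    from auxiliary_point_bound[OF this \<open>c \<ge> 0\<close>]
    have "b\<^sup>2 * L * (f v - f xs) \<le> bregman w gw (z k) xs + b * c * (gradient_step_bound (x m) - f xs)"
      by (simp add: c_def)
    also have "\<dots> \<le> bregman w gw (z (m+1)) xs + (\<alpha> (m+1))\<^sup>2 * L / 2 * (gradient_step_bound (x m) - f xs)"
      using mult_right_mono[OF rec(2)] min_le_gradient_step_bound[of "x m"] by (simp add: Suc)
    also have "\<dots> \<le> bregman w gw x0 xs"
      using potential_bound[of m] by simp
    finally show ?thesis .
  qed
  then have "f v - f xs \<le> bregman w gw x0 xs / (L * b\<^sup>2)"
    using \<open>b > 0\<close> L_pos by (simp add: pos_le_divide_eq mult.commute)
  then show ?thesis by (simp add: v_def b_def)
qed

end

theorem theorem6: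
  fixes Q :: "real^'n^'n"
    and f w :: "real^'n \<Rightarrow> real"
    and gf gw :: "real^'n \<Rightarrow> real^'n"
    and L :: real
    and xs x0 :: "real^'n"
    and \<alpha> \<alpha>t :: "nat \<Rightarrow> real"
    and x y z :: "nat \<Rightarrow> real^'n"
  assumes Q: "sym_pos_def_mat Q"
    and L_pos: "L > 0"
    and f_convex: "convex_on UNIV f"
    and f_grad: "\<And>u. (f has_derivative (\<lambda>h. gf u \<bullet> h)) (at u)"
    and f_lip: "\<And>u v. dnorm Q (gf u - gf v) \<le> L * qnorm Q (u - v)"
    and xs_min: "\<And>u. f xs \<le> f u"
    and w_grad: "\<And>u. (w has_derivative (\<lambda>h. gw u \<bullet> h)) (at u)"
    and w_sc: "\<And>u v. w v \<ge> w u + gw u \<bullet> (v - u) + 1/2 * (qnorm Q (v - u))\<^sup>2"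
    and \<alpha>_pos: "\<And>k. k \<ge> 1 \<Longrightarrow> \<alpha> k > 0"
    and \<alpha>1: "\<alpha> 1 = 2 / L"
    and \<alpha>_rec: "\<And>k. k \<ge> 1 \<Longrightarrow>
        0 \<le> (\<alpha> (k+1))\<^sup>2 * L - 2 * \<alpha> (k+1) \<and> (\<alpha> (k+1))\<^sup>2 * L - 2 * \<alpha> (k+1) \<le> (\<alpha> k)\<^sup>2 * L"
    and y0: "y 0 = x0" and z0: "z 0 = x0" and x0: "x 0 = x0"
    and y_step: "\<And>k. y (k+1) = x k - (1 / L) *\<^sub>R (matrix_inv Q *v gf (x k))"
    and z_step: "\<And>k u. bregman w gw (z k) (z (k+1)) + \<alpha> (k+1) * (gf (x k) \<bullet> (z (k+1) - x k))
                       \<le> bregman w gw (z k) u + \<alpha> (k+1) * (gf (x k) \<bullet> (u - x k))"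
    and x_step: "\<And>k. x (k+1) = (1 - 2 / (\<alpha> (k+2) * L)) *\<^sub>R y (k+1)
                                 + (2 / (\<alpha> (k+2) * L)) *\<^sub>R z (k+1)"
    and \<alpha>t_pos: "\<And>k. k \<ge> 1 \<Longrightarrow> \<alpha>t k > 0"
    and \<alpha>t1: "\<alpha>t 1 = 1 / L"
    and \<alpha>t_rec: "\<And>k. k \<ge> 1 \<Longrightarrow>
        0 \<le> (\<alpha>t (k+1))\<^sup>2 * L - \<alpha>t (k+1) \<and> (\<alpha>t (k+1))\<^sup>2 * L - \<alpha>t (k+1) \<le> 1/2 * (\<alpha> k)\<^sup>2 * L"
  shows "\<forall>k. f ((1 - 1 / (\<alpha>t (k+1) * L)) *\<^sub>R y k + (1 / (\<alpha>t (k+1) * L)) *\<^sub>R z k) - f xs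
             \<le> bregman w gw x0 xs / (L * (\<alpha>t (k+1))\<^sup>2)"
proof -
  interpret linear_coupling Q L f gf w gw xs x0 x y z \<alpha>
    by unfold_locales (fact assms)+
  show ?thesis
    using auxiliary_sequence_bound[OF \<alpha>t_pos \<alpha>t1 \<alpha>t_rec] by blast
qed

end
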